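(* Let $\Gamma=\langle x,y\mid xy^{-1}=yx^{-1}\rangle$ with generating set $\Delta=\{x,y\}$. The operator $W=W_xU_x+W_yU_y$ on $\ell^2(\Gamma)$ is a homogeneous scalar quantum walk on $C_\Delta(\Gamma)$ if and only if, up to a global phase, $W_x=\cos\phi$ and $W_y=i\sin\phi$ for some real $\phi$ (with both values nonzero). In particular, a homogeneous scalar quantum walk on $C_\Delta(\Gamma)$ exists.
   Context: The Cayley graph $C_\Delta(\Gamma)$ has vertex set $\Gamma$ and directed edges $(g,g\delta)$, $g\in\Gamma,\delta\in\Delta$. Let $\ell^2(\Gamma)$ have orthonormal basis $\{|g\rangle\}_{g\in\Gamma}$ and for $\delta\in\Gamma$ let $U_\delta|g\rangle=|g\delta\rangle$. A homogeneous scalar quantum walk on $C_\Delta(\Gamma)$ is a unitary operator $W=\sum_{\delta\in\Delta}W_\delta U_\delta$ with all complex coefficients $W_\delta$ nonzero. "Up to a global phase" means that all coefficients may be multiplied by a common complex number of modulus one. *)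

theory Defs
  imports "HOL-Analysis.Analysis"
begin

datatype gen = Gx | Gy

text \<open>A letter is a generator together with an exponent flag: (g, False) is g, (g, True) is g^-1.\<close>
type_synonym letter = "gen \<times> bool"

definition inv_letter :: "letter \<Rightarrow> letter" where
  "inv_letter a = (fst a, \<not> snd a)"

inductive pres_step :: "letter list \<Rightarrow> letter list \<Rightarrow> bool" where
  cancel: "pres_step (u @ [a, inv_letter a] @ v) (u @ v)"
| relat:  "pres_step (u @ [(Gx, False), (Gy, True)] @ v) (u @ [(Gy, False), (Gx, True)] @ v)"

definition pres_eq :: "letter list \<Rightarrow> letter list \<Rightarrow> bool" where
  "pres_eq = equivclp pres_step"

quotient_type gamma = "letter list" / pres_eq
  unfolding pres_eq_def by simp

lemma pres_step_append: "pres_step w v \<Longrightarrow> pres_step (w @ [a]) (v @ [a])"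
proof (induction rule: pres_step.induct)
  case (cancel u b v)
  then show ?case using pres_step.cancel[of u b "v @ [a]"] by simp
next
  case (relat u v)
  then show ?case using pres_step.relat[of u "v @ [a]"] by simp
qed

lemma pres_eq_append: "pres_eq w v \<Longrightarrow> pres_eq (w @ [a]) (v @ [a])"
  unfolding pres_eq_def
proof (induction rule: equivclp_induct)
  case base
  then show ?case by simp
next
  case (step y z)
  then show ?case
    by (meson equivclp_into_equivclp pres_step_append)
qed

lift_definition rmul :: "gamma \<Rightarrow> letter \<Rightarrow> gamma" is "\<lambda>w a. w @ [a]"
  by (rule pres_eq_append)

definition ell2 :: "(gamma \<Rightarrow> complex) \<Rightarrow> bool" where
  "ell2 f \<longleftrightarrow> (\<lambda>g. (cmod (f g))\<^sup>2) summable_on UNIV"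

definition ell2_normsq :: "(gamma \<Rightarrow> complex) \<Rightarrow> real" where
  "ell2_normsq f = infsum (\<lambda>g. (cmod (f g))\<^sup>2) UNIV"

text \<open>U_d |g> = |g d>, so (U_d f)(h) = f(h d^-1).\<close>
definition U_op :: "letter \<Rightarrow> (gamma \<Rightarrow> complex) \<Rightarrow> (gamma \<Rightarrow> complex)" where
  "U_op d f = (\<lambda>h. f (rmul h (inv_letter d)))"

definition x_gen :: letter where "x_gen = (Gx, False)"
definition y_gen :: letter where "y_gen = (Gy, False)"

definition walk_op :: "complex \<Rightarrow> complex \<Rightarrow> (gamma \<Rightarrow> complex) \<Rightarrow> (gamma \<Rightarrow> complex)" where
  "walk_op Wx Wy f = (\<lambda>h. Wx * U_op x_gen f h + Wy * U_op y_gen f h)"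

text \<open>Unitary operator on l^2: a norm-preserving map of l^2 onto l^2 (for linear maps
  this is equivalent to W^* W = W W^* = I).\<close>
definition unitary_l2 :: "((gamma \<Rightarrow> complex) \<Rightarrow> (gamma \<Rightarrow> complex)) \<Rightarrow> bool" where
  "unitary_l2 W \<longleftrightarrow>
     (\<forall>f. ell2 f \<longrightarrow> ell2 (W f) \<and> ell2_normsq (W f) = ell2_normsq f) \<and>
     (\<forall>g. ell2 g \<longrightarrow> (\<exists>f. ell2 f \<and> W f = g))"

definition hom_scalar_qw :: "complex \<Rightarrow> complex \<Rightarrow> bool" where
  "hom_scalar_qw Wx Wy \<longleftrightarrow> Wx \<noteq> 0 \<and> Wy \<noteq> 0 \<and> unitary_l2 (walk_op Wx Wy)"

end

theory Submission
  imports Defs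
begin

(* The defining relation says that t = x y^-1 is an involution, and h y^-1 = (h x^-1) t.
  Hence, after reindexing by h \<mapsto> h x^-1, W acts on each two-element orbit {k, k t} of right
  multiplication by t as the circulant matrix [[a, b], [b, a]] with a = W_x, b = W_y. So W is unitary
  iff that matrix is, i.e. iff |a|^2 + |b|^2 = 1 and Re (a cnj b) = 0; the necessity is read off from
  W applied to delta_1 and delta_1 + delta_(y x^-1). These two conditions are exactly the polar form
  a = \<omega> cos \<phi>, b = \<omega> i sin \<phi>. *)

lemma pres_eq_stepI: "pres_step w v \<Longrightarrow> pres_eq w v"
  unfolding pres_eq_def by (rule r_into_equivclp)

lemma rmul_rmul_inv_letter [simp]: "rmul (rmul h a) (inv_letter a) = h"
proof transfer
  fix w a
  have "pres_step (w @ [a, inv_letter a] @ []) (w @ [])"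
    by (rule pres_step.cancel)
  then show "pres_eq ((w @ [a]) @ [inv_letter a]) w"
    by (intro pres_eq_stepI) simp
qed

lemma rmul_rmul_inverse [simp]:
  "rmul (rmul h (g, False)) (g, True) = h"
  "rmul (rmul h (g, True)) (g, False) = h"
  using rmul_rmul_inv_letter[of h "(g, False)"] rmul_rmul_inv_letter[of h "(g, True)"]
  by (simp_all add: inv_letter_def)

lemma rmul_inverse_eq_iff [simp]: "rmul h (g, True) = k \<longleftrightarrow> h = rmul k (g, False)"
  by (metis rmul_rmul_inverse)

lemma rmul_relation:
  "rmul (rmul h (Gx, False)) (Gy, True) = rmul (rmul h (Gy, False)) (Gx, True)"
proof transfer
  fix w
  have "pres_step (w @ [(Gx, False), (Gy, True)] @ []) (w @ [(Gy, False), (Gx, True)] @ [])"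
    by (rule pres_step.relat)
  then show "pres_eq ((w @ [(Gx, False)]) @ [(Gy, True)]) ((w @ [(Gy, False)]) @ [(Gx, True)])"
    by (intro pres_eq_stepI) simp
qed

lemma rmul_relation_inverse:
  "rmul (rmul h (Gx, True)) (Gy, False) = rmul (rmul h (Gy, True)) (Gx, False)"
proof -
  define m where "m = rmul (rmul h (Gy, True)) (Gx, True)"
  have "h = rmul (rmul m (Gx, False)) (Gy, False)"
    by (simp add: m_def)
  then show ?thesis
    by (simp add: rmul_relation[symmetric])
qed

lemma inv_letter_inv_letter [simp]: "inv_letter (inv_letter a) = a"
  by (simp add: inv_letter_def)

lemma bij_rmul: "bij (\<lambda>h. rmul h a)"
  using rmul_rmul_inv_letter[of _ "inv_letter a"]
  by (intro o_bij[of "\<lambda>h. rmul h (inv_letter a)"]) (auto simp: fun_eq_iff)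

lift_definition gamma_one :: gamma is "[]" .

definition even_x_count :: "letter list \<Rightarrow> bool" where
  "even_x_count w \<longleftrightarrow> even (length (filter (\<lambda>a. fst a = Gx) w))"

lemma even_x_count_pres_step: "pres_step w v \<Longrightarrow> even_x_count w = even_x_count v"
  by (induction rule: pres_step.induct) (auto simp: even_x_count_def inv_letter_def)

lemma even_x_count_pres_eq: "pres_eq w v \<Longrightarrow> even_x_count w = even_x_count v"
  unfolding pres_eq_def
proof (induction rule: equivclp_induct)
  case base
  then show ?case by simp
next
  case (step v v')
  then show ?case
    using even_x_count_pres_step by (metis symclpE)
qed

lift_definition gamma_even_x :: "gamma \<Rightarrow> bool" is even_x_count
  by (rule even_x_count_pres_eq)

lemma gamma_even_x_one: "gamma_even_x gamma_one"
  by transfer (simp add: even_x_count_def)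

lemma gamma_even_x_rmul:
  "gamma_even_x (rmul h (g, b)) \<longleftrightarrow> (if g = Gx then \<not> gamma_even_x h else gamma_even_x h)"
  by transfer (auto simp: even_x_count_def)

(* The circulant matrix [[a, b], [b, a]] is unitary. *)
definition unitary_pair :: "complex \<Rightarrow> complex \<Rightarrow> bool" where
  "unitary_pair a b \<longleftrightarrow> (cmod a)\<^sup>2 + (cmod b)\<^sup>2 = 1 \<and> Re (a * cnj b) = 0"

lemma unitary_pair_cnj: "unitary_pair a b \<Longrightarrow> unitary_pair (cnj a) (cnj b)"
  by (simp add: unitary_pair_def mult.commute)

lemma cmod_add_squared: "(cmod (a + b))\<^sup>2 = (cmod a)\<^sup>2 + (cmod b)\<^sup>2 + 2 * Re (a * cnj b)"
  by (simp only: cmod_power2) (simp add: power2_eq_square algebra_simps)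

lemma cmod_squared_mix_sum:
  fixes a b u v :: complex
  shows "(cmod (a * u + b * v))\<^sup>2 + (cmod (a * v + b * u))\<^sup>2
    = ((cmod a)\<^sup>2 + (cmod b)\<^sup>2) * ((cmod u)\<^sup>2 + (cmod v)\<^sup>2) + 4 * Re (a * cnj b) * Re (u * cnj v)"
  by (simp only: cmod_power2) (simp add: power2_eq_square algebra_simps)

lemma summable_infsum_eq_by_involution:
  fixes F G :: "'a \<Rightarrow> real"
  assumes inv: "\<And>k. \<tau> (\<tau> k) = k"
    and pairs: "\<And>k. G k + G (\<tau> k) = F k + F (\<tau> k)"
    and G_nonneg: "\<And>k. 0 \<le> G k"
    and F: "F summable_on UNIV"
  shows "G summable_on UNIV" and "infsum G UNIV = infsum F UNIV"
proof -
  have bij: "bij \<tau>"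
    using inv by (rule involuntory_imp_bij)
  have reindex: "H summable_on UNIV \<Longrightarrow> (\<lambda>k. H (\<tau> k)) summable_on UNIV"
    "infsum (\<lambda>k. H (\<tau> k)) UNIV = infsum H UNIV" for H :: "'a \<Rightarrow> real"
    using summable_on_reindex_bij_betw[OF bij, of H] infsum_reindex_bij_betw[OF bij, of H] by simp_all
  have F\<tau>: "(\<lambda>k. F (\<tau> k)) summable_on UNIV"
    using F by (rule reindex)
  show G: "G summable_on UNIV"
  proof (rule summable_on_comparison_test[OF summable_on_add[OF F F\<tau>]])
    show "G k \<le> F k + F (\<tau> k)" for k
      using pairs[of k] G_nonneg[of "\<tau> k"] by simp
  qed (rule G_nonneg)
  have "2 * infsum G UNIV = infsum G UNIV + infsum (\<lambda>k. G (\<tau> k)) UNIV"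
    by (simp add: reindex)
  also have "\<dots> = infsum (\<lambda>k. F k + F (\<tau> k)) UNIV"
    using infsum_add[OF G reindex(1)[OF G]] pairs by simp
  also have "\<dots> = 2 * infsum F UNIV"
    using infsum_add[OF F F\<tau>] by (simp add: reindex)
  finally show "infsum G UNIV = infsum F UNIV"
    by simp
qed

lemma ell2_reindex_bij:
  assumes "bij p"
  shows "ell2 (\<lambda>h. f (p h)) \<longleftrightarrow> ell2 f"
    and "ell2_normsq (\<lambda>h. f (p h)) = ell2_normsq f"
  using summable_on_reindex_bij_betw[OF assms, of "\<lambda>h. (cmod (f h))\<^sup>2"]
    infsum_reindex_bij_betw[OF assms, of "\<lambda>h. (cmod (f h))\<^sup>2"]
  by (simp_all add: ell2_def ell2_normsq_def)

lemma ell2_involution_mix: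
  assumes inv: "\<And>k. \<tau> (\<tau> k) = k" and ab: "unitary_pair a b" and f: "ell2 f"
  shows "ell2 (\<lambda>k. a * f k + b * f (\<tau> k))"
    and "ell2_normsq (\<lambda>k. a * f k + b * f (\<tau> k)) = ell2_normsq f"
proof -
  have "(cmod (a * f k + b * f (\<tau> k)))\<^sup>2 + (cmod (a * f (\<tau> k) + b * f (\<tau> (\<tau> k))))\<^sup>2
      = (cmod (f k))\<^sup>2 + (cmod (f (\<tau> k)))\<^sup>2" for k
    using ab cmod_squared_mix_sum[of a "f k" b "f (\<tau> k)"] by (simp add: inv unitary_pair_def)
  from summable_infsum_eq_by_involution[where G = "\<lambda>k. (cmod (a * f k + b * f (\<tau> k)))\<^sup>2"
      and F = "\<lambda>k. (cmod (f k))\<^sup>2", OF inv this] f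
  show "ell2 (\<lambda>k. a * f k + b * f (\<tau> k))"
    and "ell2_normsq (\<lambda>k. a * f k + b * f (\<tau> k)) = ell2_normsq f"
    by (simp_all add: ell2_def ell2_normsq_def)
qed

lemma ell2_finite_support:
  assumes "finite S" and "\<And>h. h \<notin> S \<Longrightarrow> f h = 0"
  shows "ell2 f" and "ell2_normsq f = (\<Sum>h\<in>S. (cmod (f h))\<^sup>2)"
proof -
  have "(\<lambda>h. (cmod (f h))\<^sup>2) summable_on UNIV \<longleftrightarrow> (\<lambda>h. (cmod (f h))\<^sup>2) summable_on S"
    "infsum (\<lambda>h. (cmod (f h))\<^sup>2) UNIV = infsum (\<lambda>h. (cmod (f h))\<^sup>2) S"
    by (rule summable_on_cong_neutral infsum_cong_neutral; simp add: assms(2))+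
  then show "ell2 f" and "ell2_normsq f = (\<Sum>h\<in>S. (cmod (f h))\<^sup>2)"
    using assms(1) by (simp_all add: ell2_def ell2_normsq_def)
qed

lemma walk_op_eq: "walk_op a b f = (\<lambda>h. a * f (rmul h (Gx, True)) + b * f (rmul h (Gy, True)))"
  by (simp add: walk_op_def U_op_def x_gen_def y_gen_def inv_letter_def)

lemma walk_op_isometric:
  assumes ab: "unitary_pair a b" and f: "ell2 f"
  shows "ell2 (walk_op a b f)" and "ell2_normsq (walk_op a b f) = ell2_normsq f"
proof -
  define \<tau> where "\<tau> k = rmul (rmul k (Gx, False)) (Gy, True)" for k
  have inv: "\<tau> (\<tau> k) = k" for k
    by (simp add: \<tau>_def rmul_relation)
  define M where "M k = a * f k + b * f (\<tau> k)" for k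
  have "walk_op a b f = (\<lambda>h. M (rmul h (Gx, True)))"
    by (simp add: walk_op_eq M_def \<tau>_def)
  then show "ell2 (walk_op a b f)" and "ell2_normsq (walk_op a b f) = ell2_normsq f"
    using ell2_involution_mix[OF inv ab f] ell2_reindex_bij[OF bij_rmul, of M]
    by (simp_all add: M_def[abs_def])
qed

lemma walk_op_surjective:
  assumes ab: "unitary_pair a b" and g: "ell2 g"
  shows "\<exists>f. ell2 f \<and> walk_op a b f = g"
proof -
  define \<tau> where "\<tau> k = rmul (rmul k (Gx, True)) (Gy, False)" for k
  have inv: "\<tau> (\<tau> k) = k" for k
    by (simp add: \<tau>_def rmul_relation_inverse)
  (* f is the adjoint of W applied to g *)
  define M where "M k = cnj a * g k + cnj b * g (\<tau> k)" for k
  define f where "f h = M (rmul h (Gx, False))" for h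
  have "ell2 f"
    using ell2_involution_mix(1)[OF inv unitary_pair_cnj[OF ab] g] ell2_reindex_bij[OF bij_rmul, of M]
    by (simp add: f_def[abs_def] M_def[abs_def])
  moreover have "walk_op a b f = g"
  proof
    fix h
    have "walk_op a b f h = (a * cnj a + b * cnj b) * g h + (a * cnj b + cnj (a * cnj b)) * g (\<tau> h)"
      by (simp add: walk_op_eq f_def M_def \<tau>_def rmul_relation_inverse algebra_simps)
    also have "a * cnj a + b * cnj b = 1"
      using ab unfolding unitary_pair_def by (metis complex_norm_square of_real_1 of_real_add)
    also have "a * cnj b + cnj (a * cnj b) = 0"
      unfolding complex_add_cnj using ab by (simp add: unitary_pair_def)
    finally show "walk_op a b f h = g h"
      by simp
  qed
  ultimately show ?thesis
    by blast
qed

lemma unitary_pair_if_walk_op_isometric: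
  assumes isometric: "\<And>f. ell2 f \<Longrightarrow> ell2_normsq (walk_op a b f) = ell2_normsq f"
  shows "unitary_pair a b"
proof -
  define two_point :: "gamma \<Rightarrow> gamma \<Rightarrow> complex \<Rightarrow> complex \<Rightarrow> gamma \<Rightarrow> complex"
    where "two_point u v c d h = (if h = u then c else if h = v then d else 0)" for u v c d h
  have two_point: "ell2 (two_point u v c d)"
    "ell2_normsq (two_point u v c d) = (cmod c)\<^sup>2 + (cmod d)\<^sup>2" if "u \<noteq> v" for u v c d
    using ell2_finite_support[of "{u, v}" "two_point u v c d"] that
    by (simp_all add: two_point_def)
  define X where "X = rmul gamma_one (Gx, False)"
  define Y where "Y = rmul gamma_one (Gy, False)"
  define G where "G = rmul Y (Gx, True)"
  have "X \<noteq> Y" and "gamma_one \<noteq> G"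
    using gamma_even_x_one
    by (auto simp: X_def Y_def G_def gamma_even_x_rmul dest!: arg_cong[of _ _ gamma_even_x])
  have GX: "rmul G (Gx, False) = Y"
    by (simp add: G_def)
  have GY: "rmul G (Gy, False) = X"
    by (simp add: G_def Y_def X_def flip: rmul_relation)
  have preserved: "ell2_normsq (walk_op a b (two_point gamma_one G c d)) = (cmod c)\<^sup>2 + (cmod d)\<^sup>2"
    for c d
    using isometric two_point[OF \<open>gamma_one \<noteq> G\<close>] by simp
  have "walk_op a b (two_point gamma_one G 1 0) = two_point X Y a b"
    using \<open>X \<noteq> Y\<close> by (auto simp: fun_eq_iff walk_op_eq two_point_def X_def Y_def)
  then have "(cmod a)\<^sup>2 + (cmod b)\<^sup>2 = 1"
    using preserved[of 1 0] two_point(2)[OF \<open>X \<noteq> Y\<close>] by simp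
  moreover have "walk_op a b (two_point gamma_one G 1 1) = two_point X Y (a + b) (a + b)"
    using \<open>X \<noteq> Y\<close> by (auto simp: fun_eq_iff walk_op_eq two_point_def GX GY X_def Y_def)
  then have "(cmod (a + b))\<^sup>2 = 1"
    using preserved[of 1 1] two_point(2)[OF \<open>X \<noteq> Y\<close>] by simp
  ultimately show ?thesis
    using cmod_add_squared[of a b] by (simp add: unitary_pair_def)
qed

lemma unitary_l2_walk_op_iff: "unitary_l2 (walk_op a b) \<longleftrightarrow> unitary_pair a b"
  using walk_op_isometric walk_op_surjective unitary_pair_if_walk_op_isometric
  unfolding unitary_l2_def by metis

lemma unitary_pair_polar_form:
  assumes ab: "unitary_pair a b" and a: "a \<noteq> 0"
  obtains \<omega> and \<phi> :: real
  where "cmod \<omega> = 1" "a = \<omega> * complex_of_real (cos \<phi>)" "b = \<omega> * (\<i> * complex_of_real (sin \<phi>))"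
proof -
  define \<omega> where "\<omega> = a / complex_of_real (cmod a)"
  define c where "c = b / \<omega>"
  have "cmod \<omega> = 1"
    using a by (simp add: \<omega>_def norm_divide)
  then have \<omega>: "cmod \<omega> = 1" "\<omega> * cnj \<omega> = 1"
    using complex_norm_square[of \<omega>] by simp_all
  have a_eq: "a = \<omega> * complex_of_real (cmod a)" and b_eq: "b = \<omega> * c"
    using a \<omega>(1) by (auto simp: \<omega>_def c_def)
  have "a * cnj b = complex_of_real (cmod a) * cnj c"
    using \<omega>(2) by (subst a_eq, subst b_eq) (simp add: algebra_simps)
  then have "Re c = 0"
    using ab a by (simp add: unitary_pair_def)
  then have c_eq: "c = \<i> * complex_of_real (Im c)"
    by (simp add: complex_eq_iff)
  then have "cmod b = \<bar>Im c\<bar>"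
    using \<omega>(1) by (metis b_eq norm_mult mult_1 norm_ii norm_of_real)
  then have "(cmod a)\<^sup>2 + (Im c)\<^sup>2 = 1"
    using ab by (simp add: unitary_pair_def)
  then obtain \<phi> where "cmod a = cos \<phi>" "Im c = sin \<phi>"
    by (rule sincos_total_2pi)
  with \<omega>(1) a_eq b_eq c_eq show thesis
    by (intro that) auto
qed

lemma unitary_pair_cos_sin:
  assumes "cmod \<omega> = 1"
  shows "unitary_pair (\<omega> * complex_of_real (cos \<phi>)) (\<omega> * (\<i> * complex_of_real (sin \<phi>)))"
proof -
  have "\<omega> * cnj \<omega> = 1"
    using complex_norm_square[of \<omega>] assms by simp
  then have "\<omega> * complex_of_real (cos \<phi>) * cnj (\<omega> * (\<i> * complex_of_real (sin \<phi>)))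
      = - \<i> * complex_of_real (cos \<phi> * sin \<phi>)"
    by (simp add: algebra_simps)
  then show ?thesis
    using assms by (simp add: unitary_pair_def norm_mult power_mult_distrib)
qed

lemma hom_scalar_qw_iff: "hom_scalar_qw Wx Wy \<longleftrightarrow> Wx \<noteq> 0 \<and> Wy \<noteq> 0 \<and> unitary_pair Wx Wy"
  by (simp add: hom_scalar_qw_def unitary_l2_walk_op_iff)

lemma hom_scalar_qw_iff_polar_form:
  "hom_scalar_qw Wx Wy \<longleftrightarrow>
    (\<exists>\<omega> (\<phi>::real). cmod \<omega> = 1 \<and>
      Wx = \<omega> * complex_of_real (cos \<phi>) \<and> Wy = \<omega> * (\<i> * complex_of_real (sin \<phi>)) \<and>
      cos \<phi> \<noteq> 0 \<and> sin \<phi> \<noteq> 0)"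
  (is "_ \<longleftrightarrow> ?polar")
proof
  assume "hom_scalar_qw Wx Wy"
  then have "unitary_pair Wx Wy" "Wx \<noteq> 0" "Wy \<noteq> 0"
    by (simp_all add: hom_scalar_qw_iff)
  then obtain \<omega> and \<phi> :: real where "cmod \<omega> = 1" "Wx = \<omega> * complex_of_real (cos \<phi>)"
    "Wy = \<omega> * (\<i> * complex_of_real (sin \<phi>))"
    by (blast intro: unitary_pair_polar_form)
  with \<open>Wx \<noteq> 0\<close> \<open>Wy \<noteq> 0\<close> show ?polar
    by auto
next
  assume ?polar
  then show "hom_scalar_qw Wx Wy"
    using unitary_pair_cos_sin by (auto simp: hom_scalar_qw_iff)
qed

theorem mainTheorem2:
  shows "(\<forall>Wx Wy. hom_scalar_qw Wx Wy \<longleftrightarrow>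
            (\<exists>\<omega> (\<phi>::real). cmod \<omega> = 1 \<and>
                Wx = \<omega> * complex_of_real (cos \<phi>) \<and>
                Wy = \<omega> * (\<i> * complex_of_real (sin \<phi>)) \<and>
                cos \<phi> \<noteq> 0 \<and> sin \<phi> \<noteq> 0))
         \<and> (\<exists>Wx Wy. hom_scalar_qw Wx Wy)"
proof -
  have "hom_scalar_qw (complex_of_real (cos (pi / 4))) (\<i> * complex_of_real (sin (pi / 4)))"
    unfolding hom_scalar_qw_iff_polar_form
    by (intro exI[of _ 1] exI[of _ "pi / 4"]) (simp add: cos_45 sin_45)
  then show ?thesis
    using hom_scalar_qw_iff_polar_form by blast
qed

end
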